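(* Let $\alpha=(\alpha_n)_{n\ge1}$ be a non-negative non-increasing null sequence with $\alpha_1\le1$, and let $\omega\in(0,1)$. The following are equivalent: (1) the principal Calkin space $\langle\alpha\rangle$ is stable; (2) $\alpha\otimes\alpha\in\langle\alpha\rangle$; (3) there exist $r\in\mathbb N$ and $C>0$ such that $\widetilde M^{(\omega)}_n(\alpha)\le C\,\widetilde K^{(\omega)}_{n+r}(\alpha)$ for every $n\in\mathbb N\cup\{0\}$.
   Context: $c_0$: complex null sequences; for $\beta\in c_0$, $\beta^\star$ is the non-increasing rearrangement of $(|\beta_n|)$. A Calkin space is a linear subspace $\mathfrak i\subseteq c_0$ such that $\gamma\in\mathfrak i,\beta\in c_0,\beta^\star\le\gamma^\star$ termwise imply $\beta\in\mathfrak i$. $\langle\alpha\rangle$ is the smallest Calkin space containing $\alpha$. For $\beta,\gamma\in c_0$, $\beta\otimes\gamma$ is the non-increasing rearrangement with multiplicities of $(|\beta_i\gamma_j|)_{i,j}$; a Calkin space $\mathfrak i$ is stable if the smallest Calkin space containing all $\beta\otimes\gamma$, $\beta,\gamma\in\mathfrak i$, equals $\mathfrak i$. For $n\ge0$: $K^{(\omega)}_n(\alpha)=|\{m:\omega^{n+1}<\alpha_m\le\omega^n\}|$, $\widetilde K^{(\omega)}_n(\alpha)=\sum_{i=0}^nK^{(\omega)}_i(\alpha)$, $M^{(\omega)}_n(\alpha)=\sum_{i+j=n}K^{(\omega)}_i(\alpha)K^{(\omega)}_j(\alpha)$, $\widetilde M^{(\omega)}_n(\alpha)=\sum_{i=0}^nM^{(\omega)}_i(\alpha)$.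 *)

theory Defs
  imports Complex_Main
begin

text \<open>Sequences are indexed from 0 (the paper indexes from 1).\<close>

definition c0 :: "(nat \<Rightarrow> complex) set" where
  "c0 = {\<beta>. \<beta> \<longlonglongrightarrow> 0}"

text \<open>Non-increasing rearrangement (with multiplicities) of a non-negative family
  indexed by an arbitrary type: the n-th entry (0-indexed) is the least t \<ge> 0
  such that at most n indices have value > t.\<close>
definition drearr :: "('a \<Rightarrow> real) \<Rightarrow> nat \<Rightarrow> real" where
  "drearr f n = Inf {t. 0 \<le> t \<and> finite {x. f x > t} \<and> card {x. f x > t} \<le> n}"

definition dstar :: "(nat \<Rightarrow> complex) \<Rightarrow> nat \<Rightarrow> real" where
  "dstar \<beta> = drearr (\<lambda>m. cmod (\<beta> m))"

definition calkin :: "(nat \<Rightarrow> complex) set \<Rightarrow> bool" where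
  "calkin I \<longleftrightarrow> I \<subseteq> c0 \<and> (\<lambda>n. 0) \<in> I
     \<and> (\<forall>x\<in>I. \<forall>y\<in>I. (\<lambda>n. x n + y n) \<in> I)
     \<and> (\<forall>c::complex. \<forall>x\<in>I. (\<lambda>n. c * x n) \<in> I)
     \<and> (\<forall>\<gamma>\<in>I. \<forall>\<beta>\<in>c0. (\<forall>n. dstar \<beta> n \<le> dstar \<gamma> n) \<longrightarrow> \<beta> \<in> I)"

definition calkin_hull :: "(nat \<Rightarrow> complex) set \<Rightarrow> (nat \<Rightarrow> complex) set" where
  "calkin_hull S = \<Inter> {I. calkin I \<and> S \<subseteq> I}"

definition principal :: "(nat \<Rightarrow> complex) \<Rightarrow> (nat \<Rightarrow> complex) set" where
  "principal \<alpha> = calkin_hull {\<alpha>}"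

definition tensor :: "(nat \<Rightarrow> complex) \<Rightarrow> (nat \<Rightarrow> complex) \<Rightarrow> nat \<Rightarrow> complex" where
  "tensor \<beta> \<gamma> = (\<lambda>n. complex_of_real (drearr (\<lambda>(i,j). cmod (\<beta> i * \<gamma> j)) n))"

definition stable :: "(nat \<Rightarrow> complex) set \<Rightarrow> bool" where
  "stable I \<longleftrightarrow> calkin_hull {tensor \<beta> \<gamma> | \<beta> \<gamma>. \<beta> \<in> I \<and> \<gamma> \<in> I} = I"

definition Kw :: "real \<Rightarrow> (nat \<Rightarrow> real) \<Rightarrow> nat \<Rightarrow> nat" where
  "Kw \<omega> \<alpha> n = card {m. \<omega> ^ (n+1) < \<alpha> m \<and> \<alpha> m \<le> \<omega> ^ n}"

definition Kt :: "real \<Rightarrow> (nat \<Rightarrow> real) \<Rightarrow> nat \<Rightarrow> nat" where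
  "Kt \<omega> \<alpha> n = (\<Sum>i\<le>n. Kw \<omega> \<alpha> i)"

definition Mw :: "real \<Rightarrow> (nat \<Rightarrow> real) \<Rightarrow> nat \<Rightarrow> nat" where
  "Mw \<omega> \<alpha> n = (\<Sum>i\<le>n. Kw \<omega> \<alpha> i * Kw \<omega> \<alpha> (n - i))"

definition Mt :: "real \<Rightarrow> (nat \<Rightarrow> real) \<Rightarrow> nat \<Rightarrow> nat" where
  "Mt \<omega> \<alpha> n = (\<Sum>i\<le>n. Mw \<omega> \<alpha> i)"

end

theory Submission
  imports Defs
begin

text \<open>A sequence \<open>\<beta>\<close> lies in the principal Calkin space \<open>\<langle>\<alpha>\<rangle>\<close> iff \<open>\<beta>\<^sup>\<star> \<le> C \<cdot> D\<^sub>k \<alpha>\<^sup>\<star>\<close> for some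
  constant \<open>C\<close> and dilation \<open>D\<^sub>k\<close>; the nontrivial inclusion holds because a Calkin space is
  closed under dilations, \<open>D\<^sub>k x\<close> being a sum of \<open>k\<close> sequences equimeasurable with \<open>x\<close>.
  Domination is compatible with products, so \<open>\<alpha> \<otimes> \<alpha> \<in> \<langle>\<alpha>\<rangle>\<close> makes \<open>\<langle>\<alpha>\<rangle>\<close> closed under
  \<open>\<otimes>\<close>; conversely \<open>\<alpha>\<close> is dominated by \<open>\<alpha> \<otimes> \<alpha>\<close>, so the tensor products then generate
  all of \<open>\<langle>\<alpha>\<rangle>\<close>.

  For the counting criterion, cut \<open>(0, 1]\<close> into the bands \<open>(\<omega> ^ (n + 1), \<omega> ^ n]\<close>. Then
  \<open>Kt \<omega> \<alpha> n\<close> counts the entries \<open>\<alpha> m > \<omega> ^ (n + 1)\<close>, and \<open>Mt \<omega> \<alpha> n\<close> counts the pairs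
  \<open>(i, j)\<close> whose band indices sum to at most \<open>n\<close>; these pairs lie between
  \<open>{\<alpha> i * \<alpha> j > \<omega> ^ (n + 1)}\<close> and \<open>{\<alpha> i * \<alpha> j > \<omega> ^ (n + 2)}\<close>. Read at the levels
  \<open>\<omega> ^ n\<close>, the domination \<open>\<alpha> \<otimes> \<alpha> \<le> C \<cdot> D\<^sub>k \<alpha>\<close> therefore becomes
  \<open>Mt \<omega> \<alpha> n \<le> C' * Kt \<omega> \<alpha> (n + r)\<close>, the shift \<open>r\<close> absorbing the constant \<open>C\<close>.\<close>

section \<open>Non-increasing rearrangements\<close>

lemma finite_card_le_if_finite_subsets:
  assumes "\<And>F. finite F \<Longrightarrow> F \<subseteq> X \<Longrightarrow> card F \<le> n"
  shows "finite X \<and> card X \<le> n"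
proof -
  have "finite X"
  proof (rule ccontr)
    assume "infinite X"
    then obtain F where "F \<subseteq> X" "card F = Suc n" "finite F"
      using infinite_arbitrarily_large by blast
    then show False
      using assms by fastforce
  qed
  then show ?thesis
    using assms by simp
qed

lemma finite_subset_gt_Inf:
  fixes f :: "'a \<Rightarrow> real"
  assumes "A \<noteq> {}" "bdd_below A" "finite F" "F \<subseteq> {x. f x > Inf A}"
  obtains t where "t \<in> A" "F \<subseteq> {x. f x > t}"
proof (cases "F = {}")
  case False
  define m where "m = Min (f ` F)"
  have "m \<in> f ` F"
    using assms(3) False unfolding m_def by (intro Min_in) auto
  then have "Inf A < m"
    using assms(4) by auto
  then obtain t where t: "t \<in> A" "t < m"
    using cInf_less_iff[OF assms(1,2)] by blast
  have "t < f x" if "x \<in> F" for x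
  proof -
    have "m \<le> f x"
      using assms(3) that unfolding m_def by simp
    then show ?thesis
      using t(2) by linarith
  qed
  then show ?thesis
    using that t(1) by blast
qed (use assms(1) in blast)

lemma drearr_attained:
  assumes "bdd_above (range f)"
  shows "0 \<le> drearr f n \<and> finite {x. f x > drearr f n} \<and> card {x. f x > drearr f n} \<le> n"
proof -
  let ?A = "{t. 0 \<le> t \<and> finite {x. f x > t} \<and> card {x. f x > t} \<le> n}"
  obtain B where B: "\<And>x. f x \<le> B"
    using assms by (auto simp: bdd_above_def)
  have empty: "{x. f x > max B 0} = {}"
    using B by (auto simp: not_less intro: order_trans)
  have "max B 0 \<in> ?A"
    by (simp only: mem_Collect_eq empty) simp
  then have ne: "?A \<noteq> {}"
    by blast
  have bdd: "bdd_below ?A"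
    by (rule bdd_belowI[of _ 0]) auto
  have "card F \<le> n" if F: "finite F" "F \<subseteq> {x. f x > Inf ?A}" for F
  proof -
    obtain t where t: "t \<in> ?A" "F \<subseteq> {x. f x > t}"
      using finite_subset_gt_Inf[OF ne bdd F] .
    then have "card F \<le> card {x. f x > t}"
      by (intro card_mono) auto
    also have "\<dots> \<le> n"
      using t(1) by simp
    finally show ?thesis .
  qed
  moreover have "0 \<le> Inf ?A"
    using ne by (intro cInf_greatest) auto
  ultimately show ?thesis
    using finite_card_le_if_finite_subsets[of "{x. f x > Inf ?A}" n] by (simp add: drearr_def)
qed

lemma drearr_le_iff:
  assumes "bdd_above (range f)"
  shows "drearr f n \<le> s \<longleftrightarrow> 0 \<le> s \<and> finite {x. f x > s} \<and> card {x. f x > s} \<le> n"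
proof
  assume le: "drearr f n \<le> s"
  have sub: "{x. f x > s} \<subseteq> {x. f x > drearr f n}"
    using le by auto
  have "0 \<le> drearr f n" "finite {x. f x > drearr f n}" "card {x. f x > drearr f n} \<le> n"
    using drearr_attained[OF assms, of n] by auto
  then show "0 \<le> s \<and> finite {x. f x > s} \<and> card {x. f x > s} \<le> n"
    using le finite_subset[OF sub] card_mono[OF _ sub] by fastforce
next
  assume "0 \<le> s \<and> finite {x. f x > s} \<and> card {x. f x > s} \<le> n"
  then show "drearr f n \<le> s"
    unfolding drearr_def by (intro cInf_lower bdd_belowI[of _ 0]) auto
qed

lemma drearr_nonneg: "bdd_above (range f) \<Longrightarrow> 0 \<le> drearr f n"
  using drearr_attained by blast

lemma drearr_gt_eq:
  assumes "bdd_above (range f)" "0 \<le> u"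
  shows "{n. drearr f n > u} = (if finite {x. f x > u} then {..<card {x. f x > u}} else UNIV)"
  using drearr_le_iff[OF assms(1)] assms(2) by (auto simp: not_le[symmetric])

lemma drearr_tendsto_zero:
  assumes "bdd_above (range f)" "\<And>e. e > 0 \<Longrightarrow> finite {x. f x > e}"
  shows "drearr f \<longlonglongrightarrow> 0"
proof (rule LIMSEQ_I)
  fix r :: real
  assume "0 < r"
  have "norm (drearr f n) < r" if "n \<ge> card {x. f x > r / 2}" for n
  proof -
    have "drearr f n \<le> r / 2"
      unfolding drearr_le_iff[OF assms(1)] using that \<open>0 < r\<close> assms(2)[of "r / 2"] by simp
    then show ?thesis
      using \<open>0 < r\<close> drearr_nonneg[OF assms(1)] by simp
  qed
  then show "\<exists>N. \<forall>n\<ge>N. norm (drearr f n - 0) < r"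
    by auto
qed

section \<open>Domination up to dilation\<close>

text \<open>\<open>dominated_by f g C k\<close> says \<open>f\<^sup>\<star> \<le> C \<cdot> D\<^sub>k g\<^sup>\<star>\<close>, where the dilation \<open>D\<^sub>k\<close> repeats
  every entry \<open>k\<close> times. It is phrased through level sets so that families over arbitrary
  index types, such as the pairs in a tensor product, can be compared directly.\<close>

definition dominated_by :: "('a \<Rightarrow> real) \<Rightarrow> ('b \<Rightarrow> real) \<Rightarrow> real \<Rightarrow> nat \<Rightarrow> bool" where
  "dominated_by f g C k \<longleftrightarrow> (\<forall>s\<ge>0. finite {y. g y > s} \<longrightarrow>
      finite {x. f x > C * s} \<and> card {x. f x > C * s} \<le> k * card {y. g y > s})"

lemma dominated_byD:
  "dominated_by f g C k \<Longrightarrow> 0 \<le> s \<Longrightarrow> finite {y. g y > s} \<Longrightarrow>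
    finite {x. f x > C * s} \<and> card {x. f x > C * s} \<le> k * card {y. g y > s}"
  unfolding dominated_by_def by blast

lemma dominated_by_drearr_left:
  "bdd_above (range f) \<Longrightarrow> dominated_by (drearr f) f 1 1"
  unfolding dominated_by_def using drearr_gt_eq by fastforce

lemma dominated_by_drearr_right:
  assumes "bdd_above (range f)"
  shows "dominated_by f (drearr f) 1 1"
  unfolding dominated_by_def
proof (intro allI impI)
  fix s :: real
  assume "0 \<le> s" "finite {n. drearr f n > s}"
  then show "finite {x. f x > 1 * s} \<and> card {x. f x > 1 * s} \<le> 1 * card {n. drearr f n > s}"
    using drearr_gt_eq[OF assms \<open>0 \<le> s\<close>] by (simp split: if_splits)
qed

lemma dominated_by_if_drearr_le:
  assumes "bdd_above (range f)" "\<And>n. drearr f n \<le> drearr g n"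
  shows "dominated_by f g 1 1"
  unfolding dominated_by_def
proof (intro allI impI)
  fix s :: real
  assume s: "0 \<le> s" "finite {y. g y > s}"
  let ?n = "card {y. g y > s}"
  have "drearr g ?n \<le> s"
    unfolding drearr_def using s by (intro cInf_lower bdd_belowI[of _ 0]) auto
  then have "drearr f ?n \<le> s"
    using assms(2) order_trans by blast
  then show "finite {x. f x > 1 * s} \<and> card {x. f x > 1 * s} \<le> 1 * ?n"
    using drearr_le_iff[OF assms(1)] by simp
qed

lemma drearr_le_if_dominated_by:
  assumes "bdd_above (range g)" "dominated_by f g 1 1"
  shows "drearr f n \<le> drearr g n"
proof -
  let ?s = "drearr g n"
  have g: "0 \<le> ?s" "finite {y. g y > ?s}" "card {y. g y > ?s} \<le> n"
    using drearr_attained[OF assms(1)] by auto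
  then have "finite {x. f x > ?s}" "card {x. f x > ?s} \<le> n"
    using dominated_byD[OF assms(2), of ?s] by auto
  with g(1) show ?thesis
    unfolding drearr_def[of f n] by (intro cInf_lower bdd_belowI[of _ 0]) auto
qed

lemma dominated_by_trans:
  assumes "dominated_by f g C k" "dominated_by g h C' k'" "0 \<le> C'"
  shows "dominated_by f h (C * C') (k * k')"
  unfolding dominated_by_def
proof (intro allI impI)
  fix s :: real
  assume s: "0 \<le> s" "finite {z. h z > s}"
  have g: "finite {y. g y > C' * s}" "card {y. g y > C' * s} \<le> k' * card {z. h z > s}"
    using dominated_byD[OF assms(2) s] by auto
  have f: "finite {x. f x > C * (C' * s)}" "card {x. f x > C * (C' * s)} \<le> k * card {y. g y > C' * s}"
    using dominated_byD[OF assms(1) _ g(1)] s(1) assms(3) by auto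
  have "card {x. f x > C * (C' * s)} \<le> k * (k' * card {z. h z > s})"
    using f(2) mult_le_mono2[OF g(2), of k] by linarith
  with f(1) show "finite {x. f x > C * C' * s} \<and> card {x. f x > C * C' * s} \<le> k * k' * card {z. h z > s}"
    by (simp add: mult.assoc)
qed

lemma dominated_by_mono:
  assumes "dominated_by f g C k" "k \<le> k'"
  shows "dominated_by f g C k'"
  using assms order_trans[OF _ mult_le_mono1] unfolding dominated_by_def by meson

lemma dominated_by_add:
  assumes "dominated_by f g C k" "dominated_by f' g C' k'" "\<And>x. h x \<le> f x + f' x"
  shows "dominated_by h g (C + C') (k + k')"
  unfolding dominated_by_def
proof (intro allI impI)
  fix s :: real
  assume s: "0 \<le> s" "finite {y. g y > s}"
  have f: "finite {x. f x > C * s}" "card {x. f x > C * s} \<le> k * card {y. g y > s}"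
    and f': "finite {x. f' x > C' * s}" "card {x. f' x > C' * s} \<le> k' * card {y. g y > s}"
    using dominated_byD[OF assms(1) s] dominated_byD[OF assms(2) s] by auto
  have sub: "{x. h x > (C + C') * s} \<subseteq> {x. f x > C * s} \<union> {x. f' x > C' * s}"
  proof
    fix x
    assume "x \<in> {x. h x > (C + C') * s}"
    then have "C * s + C' * s < f x + f' x"
      using assms(3)[of x] by (simp add: distrib_right)
    then show "x \<in> {x. f x > C * s} \<union> {x. f' x > C' * s}"
      by auto
  qed
  have "card {x. h x > (C + C') * s} \<le> card ({x. f x > C * s} \<union> {x. f' x > C' * s})"
    using sub f(1) f'(1) by (intro card_mono) auto
  also have "\<dots> \<le> card {x. f x > C * s} + card {x. f' x > C' * s}"
    by (rule card_Un_le)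
  also have "\<dots> \<le> (k + k') * card {y. g y > s}"
    using f(2) f'(2) by (simp add: add_mult_distrib)
  finally show "finite {x. h x > (C + C') * s} \<and> card {x. h x > (C + C') * s} \<le> (k + k') * card {y. g y > s}"
    using sub f(1) f'(1) finite_subset by blast
qed

lemma dominated_by_scale:
  assumes "dominated_by f g C k" "0 < c" "\<And>x. h x \<le> c * f x"
  shows "dominated_by h g (c * C) k"
  unfolding dominated_by_def
proof (intro allI impI)
  fix s :: real
  assume s: "0 \<le> s" "finite {y. g y > s}"
  have "{x. h x > c * C * s} \<subseteq> {x. f x > C * s}"
  proof
    fix x
    assume "x \<in> {x. h x > c * C * s}"
    then have "c * (C * s) < c * f x"
      using assms(3)[of x] by (simp add: mult.assoc)
    then show "x \<in> {x. f x > C * s}"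
      using assms(2) by simp
  qed
  then show "finite {x. h x > c * C * s} \<and> card {x. h x > c * C * s} \<le> k * card {y. g y > s}"
    using dominated_byD[OF assms(1) s] by (meson card_mono finite_subset le_trans)
qed

lemma finite_gt_if_dominated_by:
  assumes "dominated_by f g C k" "C > 0" "e > 0" "finite {y. g y > e / C}"
  shows "finite {x. f x > e}"
  using dominated_byD[OF assms(1) _ assms(4)] assms(2,3) by simp

lemma dominated_by_comp_bij:
  assumes "dominated_by f g C k" "bij \<pi>" "bij \<sigma>"
  shows "dominated_by (f \<circ> \<pi>) (g \<circ> \<sigma>) C k"
  unfolding dominated_by_def
proof (intro allI impI)
  fix s :: real
  assume s: "0 \<le> s" "finite {y. (g \<circ> \<sigma>) y > s}"
  have eq: "{x. (f \<circ> \<pi>) x > C * s} = \<pi> -` {x. f x > C * s}" "{y. (g \<circ> \<sigma>) y > s} = \<sigma> -` {y. g y > s}"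
    by auto
  have card: "card (\<pi> -` A) = card A" "card (\<sigma> -` B) = card B" for A B
    using assms(2,3) by (auto simp: bij_def intro: card_vimage_inj)
  have "finite {y. g y > s}"
    using s(2) unfolding eq(2) finite_vimage_iff[OF assms(3)] .
  then show "finite {x. (f \<circ> \<pi>) x > C * s} \<and> card {x. (f \<circ> \<pi>) x > C * s} \<le> k * card {y. (g \<circ> \<sigma>) y > s}"
    using dominated_byD[OF assms(1) s(1)] unfolding eq card finite_vimage_iff[OF assms(2)] by blast
qed

lemma finite_card_le_fibrewise:
  fixes F :: "('a \<times> 'b) set" and G :: "('a \<times> 'c) set"
  assumes "finite G" and fibres: "\<And>x. finite (F `` {x}) \<and> card (F `` {x}) \<le> k * card (G `` {x})"
  shows "finite F \<and> card F \<le> k * card G"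
proof -
  let ?X = "fst ` G"
  have empty: "F `` {x} = {}" if "x \<notin> ?X" for x
  proof -
    have "G `` {x} = {}"
      using that by force
    then have "card (F `` {x}) = 0"
      using fibres[of x] by simp
    then show ?thesis
      using fibres[of x] card_0_eq by blast
  qed
  have F: "F = (SIGMA x:?X. F `` {x})"
  proof (intro equalityI subsetI)
    fix p
    assume "p \<in> F"
    then have "snd p \<in> F `` {fst p}"
      by (cases p) auto
    moreover from this have "fst p \<in> ?X"
      using empty by blast
    ultimately show "p \<in> (SIGMA x:?X. F `` {x})"
      by (cases p) auto
  qed auto
  have G: "G = (SIGMA x:?X. G `` {x})"
    by force
  have "finite ?X"
    using assms(1) by simp
  then have "card F = (\<Sum>x\<in>?X. card (F `` {x}))"
    using fibres by (subst F) simp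
  also have "\<dots> \<le> (\<Sum>x\<in>?X. k * card (G `` {x}))"
    using fibres by (intro sum_mono) blast
  also have "\<dots> = k * card G"
    using \<open>finite ?X\<close> assms(1) by (subst G) (simp add: sum_distrib_left)
  finally show ?thesis
    using F \<open>finite ?X\<close> fibres by (metis finite_SigmaI)
qed

lemma dominated_by_mult_left:
  assumes "dominated_by f g C k" "0 \<le> C" "\<And>x. 0 \<le> h x"
  shows "dominated_by (\<lambda>(x, y). h x * f y) (\<lambda>(x, y). h x * g y) C k"
  unfolding dominated_by_def
proof (intro allI impI)
  fix s :: real
  let ?F = "{p. (\<lambda>(x, y). h x * f y) p > C * s}" and ?G = "{p. (\<lambda>(x, y). h x * g y) p > s}"
  assume s: "0 \<le> s" "finite ?G"
  have "finite (?F `` {x}) \<and> card (?F `` {x}) \<le> k * card (?G `` {x})" for x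
  proof (cases "h x > 0")
    case True
    have fibres: "?G `` {x} = {y. g y > s / h x}" "?F `` {x} = {y. f y > C * (s / h x)}"
      using True by (auto simp: pos_divide_less_eq mult.commute)
    have "finite (?G `` {x})"
      using s(2) by simp
    then show ?thesis
      using dominated_byD[OF assms(1), of "s / h x"] True s(1) unfolding fibres by simp
  next
    case False
    then have "h x = 0"
      using assms(3)[of x] by simp
    then show ?thesis
      using mult_nonneg_nonneg[OF assms(2) s(1)] by (simp add: Image_singleton not_less)
  qed
  then show "finite ?F \<and> card ?F \<le> k * card ?G"
    using finite_card_le_fibrewise[of ?G ?F k] s(2) by blast
qed

lemma dominated_by_mult_right:
  assumes "dominated_by f g C k" "0 \<le> C" "\<And>x. 0 \<le> h x"
  shows "dominated_by (\<lambda>(x, y). f x * h y) (\<lambda>(x, y). g x * h y) C k"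
proof -
  have "dominated_by ((\<lambda>(x, y). h x * f y) \<circ> prod.swap) ((\<lambda>(x, y). h x * g y) \<circ> prod.swap) C k"
    by (rule dominated_by_comp_bij[OF dominated_by_mult_left[of f g C k h, OF assms] bij_swap bij_swap])
  then show ?thesis
    by (simp add: comp_def case_prod_beta' mult.commute)
qed

section \<open>Calkin spaces\<close>

lemma calkinD:
  assumes "calkin I"
  shows calkin_subset_c0: "I \<subseteq> c0"
    and calkin_zero: "(\<lambda>n. 0) \<in> I"
    and calkin_add: "x \<in> I \<Longrightarrow> y \<in> I \<Longrightarrow> (\<lambda>n. x n + y n) \<in> I"
    and calkin_scale: "x \<in> I \<Longrightarrow> (\<lambda>n. c * x n) \<in> I"
    and calkin_solid: "\<gamma> \<in> I \<Longrightarrow> \<beta> \<in> c0 \<Longrightarrow> (\<And>n. dstar \<beta> n \<le> dstar \<gamma> n) \<Longrightarrow> \<beta> \<in> I"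
  using assms unfolding calkin_def by blast+

lemma calkin_c0: "calkin c0"
proof -
  have "(\<lambda>n. x n + y n) \<longlonglongrightarrow> 0" if "x \<longlonglongrightarrow> 0" "y \<longlonglongrightarrow> 0" for x y :: "nat \<Rightarrow> complex"
    using tendsto_add[OF that] by simp
  moreover have "(\<lambda>n. c * x n) \<longlonglongrightarrow> 0" if "x \<longlonglongrightarrow> 0" for c and x :: "nat \<Rightarrow> complex"
    using tendsto_mult_right_zero[OF that] .
  ultimately show ?thesis
    unfolding calkin_def c0_def by simp
qed

lemma calkin_calkin_hull:
  assumes "X \<subseteq> c0"
  shows "calkin (calkin_hull X)"
proof -
  have mem: "x \<in> calkin_hull X \<longleftrightarrow> (\<forall>I. calkin I \<longrightarrow> X \<subseteq> I \<longrightarrow> x \<in> I)" for x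
    unfolding calkin_hull_def by blast
  show ?thesis
    unfolding calkin_def
  proof (intro conjI ballI allI impI)
    show "calkin_hull X \<subseteq> c0"
      using mem calkin_c0 assms by blast
    show "(\<lambda>n. 0) \<in> calkin_hull X"
      unfolding mem using calkin_zero by blast
    show "(\<lambda>n. x n + y n) \<in> calkin_hull X" if "x \<in> calkin_hull X" "y \<in> calkin_hull X" for x y
      using that unfolding mem using calkin_add by blast
    show "(\<lambda>n. c * x n) \<in> calkin_hull X" if "x \<in> calkin_hull X" for c x
      using that unfolding mem using calkin_scale by blast
    show "\<beta> \<in> calkin_hull X"
      if "\<gamma> \<in> calkin_hull X" "\<beta> \<in> c0" "\<forall>n. dstar \<beta> n \<le> dstar \<gamma> n" for \<gamma> \<beta>
      using that unfolding mem using calkin_solid by blast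
  qed
qed

lemma calkin_hull_minimal: "calkin I \<Longrightarrow> X \<subseteq> I \<Longrightarrow> calkin_hull X \<subseteq> I"
  unfolding calkin_hull_def by blast

lemma calkin_hull_subset: "X \<subseteq> calkin_hull X"
  unfolding calkin_hull_def by blast

lemma calkin_sum:
  assumes "calkin I" "finite A" "\<And>j. j \<in> A \<Longrightarrow> x j \<in> I"
  shows "(\<lambda>n. \<Sum>j\<in>A. x j n) \<in> I"
  using assms(2,3)
proof (induction A rule: finite_induct)
  case empty
  then show ?case
    using calkin_zero[OF assms(1)] by simp
next
  case (insert j A)
  then show ?case
    using calkin_add[OF assms(1)] by simp
qed

lemma c0_bdd_above: "\<beta> \<in> c0 \<Longrightarrow> bdd_above (range (\<lambda>n. cmod (\<beta> n)))"
proof -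
  assume "\<beta> \<in> c0"
  then have "Bseq \<beta>"
    unfolding c0_def mem_Collect_eq by (rule convergent_imp_Bseq[OF convergentI])
  then show ?thesis
    by (auto simp: Bseq_def bdd_above_def)
qed

lemma calkin_mem_if_dominated_by:
  assumes "calkin I" "\<gamma> \<in> I" "\<beta> \<in> c0" "dominated_by (\<lambda>n. cmod (\<beta> n)) (\<lambda>n. cmod (\<gamma> n)) 1 1"
  shows "\<beta> \<in> I"
proof -
  have "bdd_above (range (\<lambda>n. cmod (\<gamma> n)))"
    using c0_bdd_above calkin_subset_c0[OF assms(1)] assms(2) by (meson subsetD)
  then show ?thesis
    using calkin_solid[OF assms(1-3)] drearr_le_if_dominated_by assms(4) unfolding dstar_def by blast
qed

lemma vimage_div_eq_image:
  assumes "0 < (k::nat)"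
  shows "(\<lambda>n. n div k) -` X = (\<lambda>(m, j). m * k + j) ` (X \<times> {..<k})"
proof (intro equalityI subsetI)
  fix n
  assume "n \<in> (\<lambda>n. n div k) -` X"
  moreover have "n = n div k * k + n mod k" "n mod k < k"
    using assms by simp_all
  ultimately show "n \<in> (\<lambda>(m, j). m * k + j) ` (X \<times> {..<k})"
    by (auto intro!: image_eqI[where x="(n div k, n mod k)"])
qed auto

lemma card_vimage_div:
  assumes "0 < (k::nat)"
  shows "card ((\<lambda>n. n div k) -` X) = k * card X"
proof -
  have "inj_on (\<lambda>(m, j). m * k + j) (X \<times> {..<k})"
    by (rule inj_on_inverseI[where g="\<lambda>n. (n div k, n mod k)"]) auto
  then show ?thesis
    unfolding vimage_div_eq_image[OF assms] by (simp add: card_image card_cartesian_product)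
qed

lemma finite_vimage_div_iff:
  assumes "0 < (k::nat)"
  shows "finite ((\<lambda>n. n div k) -` X) \<longleftrightarrow> finite X"
proof
  assume "finite ((\<lambda>n. n div k) -` X)"
  moreover have "X = (\<lambda>n. n div k) ` ((\<lambda>n. n div k) -` X)"
    using assms by (auto intro!: image_eqI[where x="_ * k"])
  ultimately show "finite X"
    by (metis finite_imageI)
qed (simp add: vimage_div_eq_image[OF assms])

lemma filterlim_div_sequentially:
  "0 < (k::nat) \<Longrightarrow> filterlim (\<lambda>n. n div k) sequentially sequentially"
  unfolding filterlim_at_top eventually_sequentially
  by (metis div_le_mono nonzero_mult_div_cancel_right not_gr0)

lemma calkin_dilation:
  assumes I: "calkin I" and x: "x \<in> I" and k: "0 < k"
  shows "(\<lambda>n. x (n div k)) \<in> I"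
proof -
  define y where "y j n = (if n mod k = j then x (n div k) else 0)" for j n
  have "x \<longlonglongrightarrow> 0"
    using x calkin_subset_c0[OF I] unfolding c0_def by blast
  then have lim: "(\<lambda>n. x (n div k)) \<longlonglongrightarrow> 0"
    using filterlim_compose filterlim_div_sequentially[OF k] by blast
  have "y j \<in> I" if "j < k" for j
  proof (rule calkin_mem_if_dominated_by[OF I x])
    show "y j \<in> c0"
      unfolding c0_def using lim by (auto intro: tendsto_0_le[where K=1] simp: y_def)
    have levels: "{n. cmod (y j n) > s} = (\<lambda>m. m * k + j) ` {m. cmod (x m) > s}" if "0 \<le> s" for s
    proof (intro equalityI subsetI)
      fix n
      assume "n \<in> {n. cmod (y j n) > s}"
      then have "n mod k = j" "cmod (x (n div k)) > s"
        using \<open>0 \<le> s\<close> by (auto simp: y_def split: if_splits)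
      then show "n \<in> (\<lambda>m. m * k + j) ` {m. cmod (x m) > s}"
        by (metis (mono_tags, lifting) image_eqI mem_Collect_eq mult_div_mod_eq mult.commute)
    qed (use \<open>j < k\<close> in \<open>auto simp: y_def\<close>)
    have "inj (\<lambda>m. m * k + j)"
      using k by (auto simp: inj_def)
    then show "dominated_by (\<lambda>n. cmod (y j n)) (\<lambda>n. cmod (x n)) 1 1"
      unfolding dominated_by_def using levels by (simp add: card_image inj_on_subset)
  qed
  moreover have "(\<lambda>n. x (n div k)) = (\<lambda>n. \<Sum>j<k. y j n)"
    using k by (simp add: y_def fun_eq_iff)
  ultimately show ?thesis
    using calkin_sum[OF I, of "{..<k}" y] by simp
qed

section \<open>Principal Calkin spaces\<close>

definition dominated_seqs :: "(nat \<Rightarrow> real) \<Rightarrow> (nat \<Rightarrow> complex) set" where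
  "dominated_seqs \<alpha> = {\<beta> \<in> c0. \<exists>C>0. \<exists>k. dominated_by (\<lambda>n. cmod (\<beta> n)) \<alpha> C k}"

lemma mem_dominated_seqs:
  "\<beta> \<in> dominated_seqs \<alpha> \<longleftrightarrow> \<beta> \<in> c0 \<and> (\<exists>C>0. \<exists>k. dominated_by (\<lambda>n. cmod (\<beta> n)) \<alpha> C k)"
  unfolding dominated_seqs_def by simp

lemma add_mem_dominated_seqs:
  assumes "x \<in> dominated_seqs \<alpha>" "y \<in> dominated_seqs \<alpha>"
  shows "(\<lambda>n. x n + y n) \<in> dominated_seqs \<alpha>"
proof -
  obtain C k C' k' where x: "x \<in> c0" "C > 0" "dominated_by (\<lambda>n. cmod (x n)) \<alpha> C k"
    and y: "y \<in> c0" "C' > 0" "dominated_by (\<lambda>n. cmod (y n)) \<alpha> C' k'"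
    using assms unfolding mem_dominated_seqs by blast
  have "dominated_by (\<lambda>n. cmod (x n + y n)) \<alpha> (C + C') (k + k')"
    using dominated_by_add[OF x(3) y(3) norm_triangle_ineq] .
  moreover have "(\<lambda>n. x n + y n) \<in> c0"
    using x(1) y(1) calkin_add[OF calkin_c0] by blast
  ultimately show ?thesis
    unfolding mem_dominated_seqs using x(2) y(2) add_pos_pos by blast
qed

lemma scale_mem_dominated_seqs:
  assumes "x \<in> dominated_seqs \<alpha>"
  shows "(\<lambda>n. c * x n) \<in> dominated_seqs \<alpha>"
proof -
  obtain C k where x: "x \<in> c0" "C > 0" "dominated_by (\<lambda>n. cmod (x n)) \<alpha> C k"
    using assms unfolding mem_dominated_seqs by blast
  have c: "0 < cmod c + 1"
    using norm_ge_zero[of c] by linarith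
  have "cmod (c * x n) \<le> (cmod c + 1) * cmod (x n)" for n
    by (simp add: norm_mult mult_right_mono)
  then have "dominated_by (\<lambda>n. cmod (c * x n)) \<alpha> ((cmod c + 1) * C) k"
    by (rule dominated_by_scale[OF x(3) c])
  moreover have "(\<lambda>n. c * x n) \<in> c0"
    using x(1) calkin_scale[OF calkin_c0] by blast
  moreover have "(cmod c + 1) * C > 0"
    using c x(2) by simp
  ultimately show ?thesis
    unfolding mem_dominated_seqs by blast
qed

lemma dominated_seqs_solid:
  assumes "\<gamma> \<in> dominated_seqs \<alpha>" "\<beta> \<in> c0" "\<And>n. dstar \<beta> n \<le> dstar \<gamma> n"
  shows "\<beta> \<in> dominated_seqs \<alpha>"
proof -
  obtain C k where "C > 0" "dominated_by (\<lambda>n. cmod (\<gamma> n)) \<alpha> C k"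
    using assms(1) unfolding mem_dominated_seqs by blast
  moreover have "dominated_by (\<lambda>n. cmod (\<beta> n)) (\<lambda>n. cmod (\<gamma> n)) 1 1"
    using assms(2,3) by (intro dominated_by_if_drearr_le c0_bdd_above) (simp_all add: dstar_def)
  ultimately show ?thesis
    unfolding mem_dominated_seqs using assms(2) dominated_by_trans[of _ _ 1 1 \<alpha> C k] by fastforce
qed

lemma calkin_dominated_seqs: "calkin (dominated_seqs \<alpha>)"
proof -
  have zero: "(\<lambda>n. 0) \<in> dominated_seqs \<alpha>"
    unfolding mem_dominated_seqs c0_def dominated_by_def by (auto intro: exI[of _ 1])
  show ?thesis
    unfolding calkin_def
  proof (intro conjI ballI allI impI)
    show "dominated_seqs \<alpha> \<subseteq> c0"
      unfolding dominated_seqs_def by blast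
  qed (auto intro: zero add_mem_dominated_seqs scale_mem_dominated_seqs dominated_seqs_solid)
qed

lemma dominated_seqs_subset:
  assumes I: "calkin I" and nonneg: "\<And>n. 0 \<le> \<alpha> n" and \<alpha>: "(\<lambda>n. complex_of_real (\<alpha> n)) \<in> I"
  shows "dominated_seqs \<alpha> \<subseteq> I"
proof
  fix \<beta>
  assume "\<beta> \<in> dominated_seqs \<alpha>"
  then obtain C k0 where \<beta>: "\<beta> \<in> c0" "C > 0" "dominated_by (\<lambda>n. cmod (\<beta> n)) \<alpha> C k0"
    unfolding dominated_seqs_def by blast
  define k where "k = Suc k0"
  have k: "0 < k" "dominated_by (\<lambda>n. cmod (\<beta> n)) \<alpha> C k"
    using dominated_by_mono[OF \<beta>(3)] unfolding k_def by auto
  define \<gamma> where "\<gamma> n = complex_of_real C * complex_of_real (\<alpha> (n div k))" for n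
  have "\<gamma> \<in> I"
    unfolding \<gamma>_def by (intro calkin_scale[OF I] calkin_dilation[OF I \<alpha> k(1)])
  moreover have "dominated_by (\<lambda>n. cmod (\<beta> n)) (\<lambda>n. cmod (\<gamma> n)) 1 1"
    unfolding dominated_by_def
  proof (intro allI impI)
    fix s :: real
    assume s: "0 \<le> s" "finite {n. cmod (\<gamma> n) > s}"
    have levels: "{n. cmod (\<gamma> n) > s} = (\<lambda>n. n div k) -` {m. \<alpha> m > s / C}"
      using \<beta>(2) nonneg by (auto simp: \<gamma>_def norm_mult pos_divide_less_eq mult.commute)
    have "finite {m. \<alpha> m > s / C}"
      using s(2) unfolding levels finite_vimage_div_iff[OF k(1)] .
    then have "finite {n. cmod (\<beta> n) > C * (s / C)} \<and> card {n. cmod (\<beta> n) > C * (s / C)} \<le> k * card {m. \<alpha> m > s / C}"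
      using dominated_byD[OF k(2)] s(1) \<beta>(2) by (simp only: divide_nonneg_pos)
    then show "finite {n. cmod (\<beta> n) > 1 * s} \<and> card {n. cmod (\<beta> n) > 1 * s} \<le> 1 * card {n. cmod (\<gamma> n) > s}"
      using \<beta>(2) unfolding levels card_vimage_div[OF k(1)] by simp
  qed
  ultimately show "\<beta> \<in> I"
    using calkin_mem_if_dominated_by[OF I _ \<beta>(1)] by blast
qed

locale nonneg_null_seq =
  fixes \<alpha> :: "nat \<Rightarrow> real"
  assumes nonneg: "\<And>n. 0 \<le> \<alpha> n" and tendsto_zero: "\<alpha> \<longlonglongrightarrow> 0"
begin

abbreviation a :: "nat \<Rightarrow> complex" where
  "a \<equiv> \<lambda>n. complex_of_real (\<alpha> n)"

lemma finite_gt: "e > 0 \<Longrightarrow> finite {n. \<alpha> n > e}"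
proof -
  assume "e > 0"
  then obtain N where "\<forall>n\<ge>N. norm (\<alpha> n - 0) < e"
    using LIMSEQ_D[OF tendsto_zero] by blast
  then have "{n. \<alpha> n > e} \<subseteq> {..<N}"
    by (auto simp: not_less[symmetric])
  then show ?thesis
    using finite_subset by blast
qed

lemma a_in_c0: "a \<in> c0"
  unfolding c0_def using tendsto_of_real[OF tendsto_zero] by simp

lemma bdd_above: "bdd_above (range \<alpha>)"
  using c0_bdd_above[OF a_in_c0] nonneg by simp

lemma a_in_dominated_seqs: "a \<in> dominated_seqs \<alpha>"
proof -
  have "dominated_by (\<lambda>n. cmod (a n)) \<alpha> 1 1"
    using nonneg unfolding dominated_by_def by simp
  then show ?thesis
    unfolding mem_dominated_seqs using a_in_c0 zero_less_one by blast
qed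

lemma principal_eq: "principal a = dominated_seqs \<alpha>"
proof
  show "principal a \<subseteq> dominated_seqs \<alpha>"
    unfolding principal_def using calkin_dominated_seqs a_in_dominated_seqs
    by (intro calkin_hull_minimal) auto
  show "dominated_seqs \<alpha> \<subseteq> principal a"
    unfolding principal_def calkin_hull_def using dominated_seqs_subset nonneg by blast
qed

end

section \<open>Tensor products and stability\<close>

lemma bdd_above_mult:
  fixes f :: "'a \<Rightarrow> real" and g :: "'b \<Rightarrow> real"
  assumes "\<And>x. 0 \<le> f x" "\<And>y. 0 \<le> g y" "bdd_above (range f)" "bdd_above (range g)"
  shows "bdd_above (range (\<lambda>(x, y). f x * g y))"
proof -
  obtain B B' where B: "\<And>x. f x \<le> B" "\<And>y. g y \<le> B'"
    using assms(3,4) by (auto simp: bdd_above_def)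
  have "f x * g y \<le> B * B'" for x y
    using mult_mono[OF B(1)[of x] B(2)[of y] order_trans[OF assms(1) B(1)] assms(2)] .
  then show ?thesis
    by (intro bdd_aboveI[of _ "B * B'"]) (auto split: prod.splits)
qed

lemma tensor_eq_drearr:
  "tensor \<beta> \<gamma> = (\<lambda>n. complex_of_real (drearr (\<lambda>(i, j). cmod (\<beta> i) * cmod (\<gamma> j)) n))"
  unfolding tensor_def by (simp add: norm_mult case_prod_beta)

lemma tensor_in_c0:
  assumes "\<beta> \<in> c0" "\<gamma> \<in> c0" "\<And>e. e > 0 \<Longrightarrow> finite {p. (\<lambda>(i, j). cmod (\<beta> i) * cmod (\<gamma> j)) p > e}"
  shows "tensor \<beta> \<gamma> \<in> c0"
proof -
  have "bdd_above (range (\<lambda>(i, j). cmod (\<beta> i) * cmod (\<gamma> j)))"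
    using assms(1,2) by (intro bdd_above_mult c0_bdd_above) auto
  then show ?thesis
    unfolding c0_def tensor_eq_drearr using assms(3)
    by (simp add: drearr_tendsto_zero tendsto_of_real[where 'a=complex, of _ 0, simplified])
qed

context nonneg_null_seq
begin

definition outer :: "nat \<times> nat \<Rightarrow> real" where
  "outer = (\<lambda>(i, j). \<alpha> i * \<alpha> j)"

lemma bdd_above_outer: "bdd_above (range outer)"
  unfolding outer_def by (rule bdd_above_mult[OF nonneg nonneg bdd_above bdd_above])

lemma finite_outer_gt:
  assumes "e > 0"
  shows "finite {p. outer p > e}"
proof -
  obtain B0 where B0: "\<And>n. \<alpha> n \<le> B0"
    using bdd_above by (auto simp: bdd_above_def)
  define B where "B = max B0 1"
  have B: "\<And>n. \<alpha> n \<le> B" "B > 0"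
    unfolding B_def using B0 by (simp_all add: le_max_iff_disj)
  have "\<alpha> i > e / B" "\<alpha> j > e / B" if "\<alpha> i * \<alpha> j > e" for i j
  proof -
    have "\<alpha> i * \<alpha> j \<le> \<alpha> i * B" "\<alpha> i * \<alpha> j \<le> B * \<alpha> j"
      using B(1) nonneg by (simp_all add: mult_left_mono mult_right_mono)
    then show "\<alpha> i > e / B" "\<alpha> j > e / B"
      using that B(2) by (simp_all add: divide_less_eq mult.commute)
  qed
  then have "{p. outer p > e} \<subseteq> {n. \<alpha> n > e / B} \<times> {n. \<alpha> n > e / B}"
    unfolding outer_def by auto
  then show ?thesis
    using finite_gt[of "e / B"] assms B(2) finite_subset by auto
qed

lemma tensor_a_a: "tensor a a = (\<lambda>n. complex_of_real (drearr outer n))"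
  unfolding tensor_eq_drearr outer_def using nonneg by simp

lemma cmod_tensor_a_a: "(\<lambda>n. cmod (tensor a a n)) = drearr outer"
  using drearr_nonneg[OF bdd_above_outer] by (simp add: tensor_a_a fun_eq_iff)

lemma tensor_a_a_in_c0: "tensor a a \<in> c0"
  using tensor_in_c0[OF a_in_c0 a_in_c0] finite_outer_gt nonneg unfolding outer_def by simp

text \<open>The chain \<open>\<beta> \<otimes> \<gamma> \<preceq> \<alpha> \<otimes> \<gamma> \<preceq> \<alpha> \<otimes> \<alpha> \<preceq> \<alpha>\<close>, each step up to constants and dilations.\<close>

lemma tensor_mem_dominated_seqs:
  assumes "\<beta> \<in> dominated_seqs \<alpha>" "\<gamma> \<in> dominated_seqs \<alpha>" "tensor a a \<in> dominated_seqs \<alpha>"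
  shows "tensor \<beta> \<gamma> \<in> dominated_seqs \<alpha>"
proof -
  let ?T = "\<lambda>(i, j). cmod (\<beta> i) * cmod (\<gamma> j)"
  obtain C1 k1 where \<beta>: "\<beta> \<in> c0" "C1 > 0" "dominated_by (\<lambda>n. cmod (\<beta> n)) \<alpha> C1 k1"
    using assms(1) unfolding mem_dominated_seqs by blast
  obtain C2 k2 where \<gamma>: "\<gamma> \<in> c0" "C2 > 0" "dominated_by (\<lambda>n. cmod (\<gamma> n)) \<alpha> C2 k2"
    using assms(2) unfolding mem_dominated_seqs by blast
  obtain C3 k3 where aa: "C3 > 0" "dominated_by (drearr outer) \<alpha> C3 k3"
    using assms(3) unfolding mem_dominated_seqs cmod_tensor_a_a by blast
  have "dominated_by outer \<alpha> C3 k3"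
    using dominated_by_trans[OF dominated_by_drearr_right[OF bdd_above_outer] aa(2)] aa(1) by simp
  then have "dominated_by (\<lambda>(i, j). \<alpha> i * cmod (\<gamma> j)) \<alpha> (C2 * C3) (k2 * k3)"
    unfolding outer_def using \<gamma>(2) aa(1)
    by (intro dominated_by_trans[OF dominated_by_mult_left[of _ _ _ _ \<alpha>, OF \<gamma>(3)]]) (auto simp: nonneg)
  then have T: "dominated_by ?T \<alpha> (C1 * (C2 * C3)) (k1 * (k2 * k3))"
    using \<beta>(2) \<gamma>(2) aa(1)
    by (intro dominated_by_trans[OF dominated_by_mult_right[of _ _ _ _ "\<lambda>j. cmod (\<gamma> j)", OF \<beta>(3)]]) auto
  have pos: "C1 * (C2 * C3) > 0"
    using \<beta>(2) \<gamma>(2) aa(1) by simp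
  have bdd: "bdd_above (range ?T)"
    using \<beta>(1) \<gamma>(1) by (intro bdd_above_mult c0_bdd_above) auto
  have "tensor \<beta> \<gamma> \<in> c0"
    using \<beta>(1) \<gamma>(1) finite_gt_if_dominated_by[OF T pos] finite_gt pos by (intro tensor_in_c0) auto
  moreover have "dominated_by (\<lambda>n. cmod (tensor \<beta> \<gamma> n)) \<alpha> (C1 * (C2 * C3)) (k1 * (k2 * k3))"
    using dominated_by_trans[OF dominated_by_drearr_left[OF bdd] T] drearr_nonneg[OF bdd] pos
    unfolding tensor_eq_drearr by simp
  ultimately show ?thesis
    unfolding mem_dominated_seqs using pos by blast
qed

lemma dominated_by_outer:
  assumes "\<alpha> i > 0"
  shows "dominated_by \<alpha> outer (1 / \<alpha> i) 1"
  unfolding dominated_by_def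
proof (intro allI impI)
  fix s :: real
  assume s: "0 \<le> s" "finite {p. outer p > s}"
  have levels: "{n. \<alpha> n > 1 / \<alpha> i * s} = Pair i -` {p. outer p > s}"
    using assms by (auto simp: outer_def divide_less_eq mult.commute)
  have inj: "inj (Pair i)"
    by (simp add: inj_def)
  have "finite (Pair i -` {p. outer p > s})"
    by (rule finite_vimageI[OF s(2) inj])
  moreover have "card (Pair i -` {p. outer p > s}) \<le> card {p. outer p > s}"
    using card_vimage_inj_on_le[OF inj s(2)] by (simp only: Int_UNIV_right)
  ultimately show "finite {n. \<alpha> n > 1 / \<alpha> i * s} \<and> card {n. \<alpha> n > 1 / \<alpha> i * s} \<le> 1 * card {p. outer p > s}"
    unfolding levels by (simp only: mult_1)
qed

lemma calkin_mem_if_tensor_mem: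
  assumes I: "calkin I" and "tensor a a \<in> I"
  shows "a \<in> I"
proof (cases "\<exists>i. \<alpha> i > 0")
  case True
  then obtain i where i: "\<alpha> i > 0"
    by blast
  have drearr_outer: "(\<lambda>n. complex_of_real (drearr outer n)) \<in> I"
    using assms(2) unfolding tensor_a_a .
  have "(\<lambda>n. cmod (a n)) = \<alpha>"
    using nonneg by (simp add: fun_eq_iff)
  then have "dominated_by (\<lambda>n. cmod (a n)) (drearr outer) (1 / \<alpha> i) 1"
    using dominated_by_trans[OF dominated_by_outer[OF i] dominated_by_drearr_right[OF bdd_above_outer]]
    by simp
  moreover have "1 / \<alpha> i > 0"
    using i by simp
  ultimately have "a \<in> dominated_seqs (drearr outer)"
    unfolding dominated_seqs_def using a_in_c0 by blast
  then show ?thesis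
    using dominated_seqs_subset[OF I drearr_nonneg[OF bdd_above_outer] drearr_outer] by blast
next
  case False
  then have "a = (\<lambda>n. 0)"
    using nonneg by (simp add: fun_eq_iff not_less order_antisym)
  then show ?thesis
    using calkin_zero[OF I] by simp
qed

lemma calkin_hull_tensors_eq:
  assumes aa: "tensor a a \<in> principal a"
  shows "calkin_hull {tensor \<beta> \<gamma> | \<beta> \<gamma>. \<beta> \<in> principal a \<and> \<gamma> \<in> principal a} = principal a"
    (is "calkin_hull ?T = _")
proof (rule antisym)
  have calkin_principal: "calkin (principal a)"
    unfolding principal_eq by (rule calkin_dominated_seqs)
  have "tensor \<beta> \<gamma> \<in> principal a" if "\<beta> \<in> principal a" "\<gamma> \<in> principal a" for \<beta> \<gamma>
    using tensor_mem_dominated_seqs that aa unfolding principal_eq .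
  then have T: "?T \<subseteq> principal a"
    by blast
  then show "calkin_hull ?T \<subseteq> principal a"
    by (rule calkin_hull_minimal[OF calkin_principal])
  have hull: "calkin (calkin_hull ?T)"
    using T calkin_subset_c0[OF calkin_principal] by (intro calkin_calkin_hull) (rule order_trans)
  have "a \<in> principal a"
    unfolding principal_eq by (rule a_in_dominated_seqs)
  then have "tensor a a \<in> ?T"
    by blast
  then have "tensor a a \<in> calkin_hull ?T"
    by (rule subsetD[OF calkin_hull_subset])
  then have "a \<in> calkin_hull ?T"
    by (rule calkin_mem_if_tensor_mem[OF hull])
  then have "dominated_seqs \<alpha> \<subseteq> calkin_hull ?T"
    by (rule dominated_seqs_subset[OF hull nonneg])
  then show "principal a \<subseteq> calkin_hull ?T"
    by (rule ord_eq_le_trans[OF principal_eq])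
qed

lemma stable_principal_iff: "stable (principal a) \<longleftrightarrow> tensor a a \<in> principal a"
proof
  let ?T = "{tensor \<beta> \<gamma> | \<beta> \<gamma>. \<beta> \<in> principal a \<and> \<gamma> \<in> principal a}"
  assume "stable (principal a)"
  then have hull: "calkin_hull ?T = principal a"
    unfolding stable_def .
  have "a \<in> principal a"
    unfolding principal_eq by (rule a_in_dominated_seqs)
  then have "tensor a a \<in> ?T"
    by blast
  then show "tensor a a \<in> principal a"
    using calkin_hull_subset[of ?T] unfolding hull by blast
next
  assume "tensor a a \<in> principal a"
  then show "stable (principal a)"
    unfolding stable_def by (rule calkin_hull_tensors_eq)
qed

end

section \<open>The counting criterion\<close>

locale banded_seq = nonneg_null_seq +
  fixes \<omega> :: real
  assumes le_one: "\<And>n. \<alpha> n \<le> 1" and omega_pos: "0 < \<omega>" and omega_less_one: "\<omega> < 1"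
begin

lemma pow_antimono: "i \<le> j \<Longrightarrow> \<omega> ^ j \<le> \<omega> ^ i"
  using omega_pos omega_less_one by (intro power_decreasing) auto

lemma pow_less_iff: "\<omega> ^ i < \<omega> ^ j \<longleftrightarrow> j < i"
  using omega_pos omega_less_one by (rule power_strict_decreasing_iff)

lemma pow_band_exists:
  assumes "0 < x" "x \<le> 1"
  obtains j where "\<omega> ^ (j + 1) < x" "x \<le> \<omega> ^ j"
proof -
  have ex: "\<exists>n. \<omega> ^ n < x"
    using real_arch_pow_inv[OF assms(1) omega_less_one] .
  define n where "n = (LEAST n. \<omega> ^ n < x)"
  have n: "\<omega> ^ n < x"
    unfolding n_def by (rule LeastI_ex[OF ex])
  then obtain j where j: "n = Suc j"
    using assms(2) by (cases n) auto
  have "\<not> \<omega> ^ j < x"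
    using Least_le[of "\<lambda>n. \<omega> ^ n < x" j] unfolding n_def[symmetric] j by auto
  then show ?thesis
    using that n j by (simp add: not_less)
qed

definition band :: "nat \<Rightarrow> nat set" where
  "band i = {m. \<omega> ^ (i + 1) < \<alpha> m \<and> \<alpha> m \<le> \<omega> ^ i}"

lemma card_band: "card (band i) = Kw \<omega> \<alpha> i"
  unfolding band_def Kw_def by simp

lemma finite_band: "finite (band i)"
proof -
  have "band i \<subseteq> {m. \<alpha> m > \<omega> ^ (i + 1)}"
    unfolding band_def by auto
  then show ?thesis
    using finite_gt[of "\<omega> ^ (i + 1)"] omega_pos finite_subset by auto
qed

lemma band_unique: "m \<in> band i \<Longrightarrow> m \<in> band j \<Longrightarrow> i = j"
  unfolding band_def using pow_antimono[of "i + 1" j] pow_antimono[of "j + 1" i]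
  by (cases i j rule: linorder_cases) auto

lemma UN_band: "(\<Union>i\<le>n. band i) = {m. \<alpha> m > \<omega> ^ (n + 1)}"
proof (induction n)
  case 0
  then show ?case
    using le_one by (auto simp: band_def)
next
  case (Suc n)
  have "{m. \<alpha> m > \<omega> ^ (Suc n + 1)} = {m. \<alpha> m > \<omega> ^ (n + 1)} \<union> band (Suc n)"
    using pow_antimono[of "n + 1" "Suc n + 1"] by (auto simp: band_def)
  then show ?case
    using Suc.IH by (simp add: atMost_Suc Un_commute)
qed

lemma Kt_eq_card: "Kt \<omega> \<alpha> n = card {m. \<alpha> m > \<omega> ^ (n + 1)}"
proof -
  have "card (\<Union>i\<le>n. band i) = (\<Sum>i\<le>n. card (band i))"
    using finite_band band_unique by (intro card_UN_disjoint) auto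
  then show ?thesis
    unfolding Kt_def UN_band card_band by simp
qed

lemma outer_le_one: "outer p \<le> 1"
  unfolding outer_def using nonneg le_one by (auto intro: mult_le_one split: prod.split)

definition band_pairs :: "nat \<Rightarrow> (nat \<times> nat) set" where
  "band_pairs n = (\<Union>i\<le>n. \<Union>j\<le>i. band j \<times> band (i - j))"

lemma finite_band_pairs: "finite (band_pairs n)"
  unfolding band_pairs_def by (simp add: finite_band)

lemma Mt_eq_card: "Mt \<omega> \<alpha> n = card (band_pairs n)"
proof -
  have Mw: "Mw \<omega> \<alpha> i = card (\<Union>j\<le>i. band j \<times> band (i - j))" for i
  proof -
    have "card (\<Union>j\<le>i. band j \<times> band (i - j)) = (\<Sum>j\<le>i. card (band j \<times> band (i - j)))"
      using finite_band band_unique by (intro card_UN_disjoint) auto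
    then show ?thesis
      unfolding Mw_def by (simp add: card_band card_cartesian_product)
  qed
  have "(\<Union>j\<le>i. band j \<times> band (i - j)) \<inter> (\<Union>j\<le>i'. band j \<times> band (i' - j)) = {}"
    if "i \<noteq> i'" for i i'
  proof -
    have "i = i'" if "p \<in> band j" "q \<in> band (i - j)" "p \<in> band j'" "q \<in> band (i' - j')" "j \<le> i" "j' \<le> i'"
      for p q j j'
      using band_unique[OF that(1,3)] band_unique[OF that(2,4)] that(5,6) by linarith
    then show ?thesis
      using \<open>i \<noteq> i'\<close> by blast
  qed
  then have "card (band_pairs n) = (\<Sum>i\<le>n. card (\<Union>j\<le>i. band j \<times> band (i - j)))"
    unfolding band_pairs_def using finite_band by (intro card_UN_disjoint) auto
  then show ?thesis
    unfolding Mt_def Mw by simp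
qed

lemma band_pairs_subset: "band_pairs n \<subseteq> {p. outer p > \<omega> ^ (n + 2)}"
proof
  fix p
  assume "p \<in> band_pairs n"
  then obtain i j x y where ij: "i \<le> n" "j \<le> i" "p = (x, y)" "x \<in> band j" "y \<in> band (i - j)"
    unfolding band_pairs_def by auto
  have x: "\<omega> ^ (j + 1) < \<alpha> x" and y: "\<omega> ^ (i - j + 1) < \<alpha> y"
    using ij(4,5) unfolding band_def by auto
  have "0 < \<omega> ^ (j + 1)" "0 \<le> \<omega> ^ (i - j + 1)"
    using omega_pos by simp_all
  then have "\<omega> ^ (j + 1) * \<omega> ^ (i - j + 1) < \<alpha> x * \<alpha> y"
    using x y by (intro mult_strict_mono) auto
  also have "\<omega> ^ (j + 1) * \<omega> ^ (i - j + 1) = \<omega> ^ (i + 2)"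
    using ij(2) by (simp flip: power_add)
  finally have "\<omega> ^ (n + 2) < \<alpha> x * \<alpha> y"
    using pow_antimono[of "i + 2" "n + 2"] ij(1) by linarith
  then show "p \<in> {p. outer p > \<omega> ^ (n + 2)}"
    using ij(3) unfolding outer_def by simp
qed

lemma subset_band_pairs: "{p. outer p > \<omega> ^ (n + 1)} \<subseteq> band_pairs n"
proof
  fix p
  assume "p \<in> {p. outer p > \<omega> ^ (n + 1)}"
  then obtain x y where p: "p = (x, y)" and xy: "\<alpha> x * \<alpha> y > \<omega> ^ (n + 1)"
    unfolding outer_def by (cases p) auto
  have "\<alpha> x * \<alpha> y \<le> \<alpha> x" "\<alpha> x * \<alpha> y \<le> \<alpha> y"
    using nonneg le_one by (simp_all add: mult_left_le mult_left_le_one_le)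
  then have "x \<in> (\<Union>i\<le>n. band i)" "y \<in> (\<Union>i\<le>n. band i)"
    unfolding UN_band using xy by auto
  then obtain j l where jl: "x \<in> band j" "y \<in> band l"
    by blast
  then have "\<alpha> x * \<alpha> y \<le> \<omega> ^ j * \<omega> ^ l"
    using nonneg omega_pos unfolding band_def by (intro mult_mono) auto
  then have "\<omega> ^ (n + 1) < \<omega> ^ (j + l)"
    using xy by (simp add: power_add)
  then have "j + l \<le> n"
    unfolding pow_less_iff by simp
  then show "p \<in> band_pairs n"
    unfolding band_pairs_def p using jl by (intro UN_I[of "j + l"] UN_I[of j]) auto
qed

lemma Mt_le_Kt_if_dominated_by:
  assumes dom: "dominated_by outer \<alpha> C k" and "C > 0"
  obtains r where "r \<ge> 1" "\<And>n. Mt \<omega> \<alpha> n \<le> k * Kt \<omega> \<alpha> (n + r)"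
proof -
  obtain j where "\<omega> ^ j < 1 / C"
    using real_arch_pow_inv[of "1 / C" \<omega>] omega_less_one \<open>C > 0\<close> by auto
  then have Cj: "C * \<omega> ^ j \<le> 1"
    using \<open>C > 0\<close> by (simp add: field_simps)
  have "Mt \<omega> \<alpha> n \<le> k * Kt \<omega> \<alpha> (n + (j + 1))" for n
  proof -
    define s where "s = \<omega> ^ (n + j + 2)"
    have "C * s = (C * \<omega> ^ j) * \<omega> ^ (n + 2)"
      unfolding s_def by (simp add: power_add algebra_simps)
    also have "\<dots> \<le> \<omega> ^ (n + 2)"
      using Cj omega_pos \<open>C > 0\<close> by (intro mult_left_le_one_le) auto
    finally have sub: "{p. outer p > \<omega> ^ (n + 2)} \<subseteq> {p. outer p > C * s}"
      by auto
    have fin: "finite {p. outer p > C * s}"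
      using finite_outer_gt \<open>C > 0\<close> omega_pos unfolding s_def by simp
    have "Mt \<omega> \<alpha> n \<le> card {p. outer p > \<omega> ^ (n + 2)}"
      unfolding Mt_eq_card using band_pairs_subset finite_subset[OF sub fin] by (rule card_mono[rotated])
    also have "\<dots> \<le> card {p. outer p > C * s}"
      by (rule card_mono[OF fin sub])
    also have "\<dots> \<le> k * card {m. \<alpha> m > s}"
      using dominated_byD[OF dom] finite_gt omega_pos unfolding s_def by simp
    also have "card {m. \<alpha> m > s} = Kt \<omega> \<alpha> (n + (j + 1))"
      unfolding Kt_eq_card s_def by (simp add: add.assoc)
    finally show ?thesis .
  qed
  then show ?thesis
    using that[of "j + 1"] by simp
qed

lemma card_outer_gt_le_if_Mt_le_Kt:
  assumes bound: "\<And>n. real (Mt \<omega> \<alpha> n) \<le> C * real (Kt \<omega> \<alpha> (n + r))" and "C > 0"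
    and s: "0 < s" "s \<le> \<omega> ^ (r + 1)"
  shows "card {p. outer p > s / \<omega> ^ (r + 1)} \<le> nat \<lceil>C\<rceil> * card {x. \<alpha> x > s}"
proof -
  have "s \<le> 1"
    using s(2) pow_antimono[of 0 "r + 1"] by simp
  then obtain m where m: "\<omega> ^ (m + 1) < s" "s \<le> \<omega> ^ m"
    using pow_band_exists[OF s(1)] by blast
  then have "r + 1 \<le> m"
    using s(2) pow_less_iff[of "m + 1" "r + 1"] by linarith
  define n where "n = m - (r + 1)"
  have m_eq: "m = n + r + 1"
    unfolding n_def using \<open>r + 1 \<le> m\<close> by simp
  have eq: "\<omega> ^ (n + 1) * \<omega> ^ (r + 1) = \<omega> ^ (m + 1)"
    unfolding power_add[symmetric] m_eq by (simp add: ac_simps)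
  have pos: "0 < \<omega> ^ (r + 1)"
    using omega_pos by simp
  have "\<omega> ^ (n + 1) < s / \<omega> ^ (r + 1)"
    using m(1) unfolding pos_less_divide_eq[OF pos] eq .
  then have "{p. outer p > s / \<omega> ^ (r + 1)} \<subseteq> band_pairs n"
    using subset_band_pairs[of n] by auto
  then have "card {p. outer p > s / \<omega> ^ (r + 1)} \<le> Mt \<omega> \<alpha> n"
    unfolding Mt_eq_card by (rule card_mono[OF finite_band_pairs])
  then have "real (card {p. outer p > s / \<omega> ^ (r + 1)}) \<le> C * real (card {x. \<alpha> x > \<omega> ^ m})"
    using bound[of n] unfolding Kt_eq_card m_eq by linarith
  also have "\<dots> \<le> C * real (card {x. \<alpha> x > s})"
  proof -
    have "{x. \<alpha> x > \<omega> ^ m} \<subseteq> {x. \<alpha> x > s}"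
      using m(2) by auto
    then have "card {x. \<alpha> x > \<omega> ^ m} \<le> card {x. \<alpha> x > s}"
      using finite_gt[OF s(1)] by (rule card_mono[rotated])
    then show ?thesis
      using \<open>C > 0\<close> by simp
  qed
  also have "\<dots> \<le> real (nat \<lceil>C\<rceil>) * real (card {x. \<alpha> x > s})"
    by (intro mult_right_mono real_nat_ceiling_ge) simp
  finally show ?thesis
    by (simp only: of_nat_mult[symmetric] of_nat_le_iff)
qed

text \<open>The summand \<open>card {n. \<alpha> n > 0}\<close> is only needed at the level \<open>s = 0\<close>.\<close>

lemma dominated_by_outer_if_Mt_le_Kt:
  assumes bound: "\<And>n. real (Mt \<omega> \<alpha> n) \<le> C * real (Kt \<omega> \<alpha> (n + r))" and "C > 0"
  shows "dominated_by outer \<alpha> (1 / \<omega> ^ (r + 1)) (nat \<lceil>C\<rceil> + card {n. \<alpha> n > 0})"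
  unfolding dominated_by_def
proof (intro allI impI)
  fix s :: real
  let ?k = "nat \<lceil>C\<rceil> + card {n. \<alpha> n > 0}" and ?t = "1 / \<omega> ^ (r + 1) * s"
  assume s: "0 \<le> s" "finite {n. \<alpha> n > s}"
  consider (zero) "s = 0" | (small) "0 < s" "s \<le> \<omega> ^ (r + 1)" | (large) "\<omega> ^ (r + 1) < s"
    using s(1) by (cases "s = 0"; cases "s \<le> \<omega> ^ (r + 1)") auto
  then show "finite {p. outer p > ?t} \<and> card {p. outer p > ?t} \<le> ?k * card {n. \<alpha> n > s}"
  proof cases
    case zero
    have "{p. outer p > ?t} = {n. \<alpha> n > 0} \<times> {n. \<alpha> n > 0}"
      unfolding zero outer_def using nonneg by (auto simp: zero_less_mult_iff less_le)
    moreover have "card {n. \<alpha> n > 0} * card {n. \<alpha> n > 0} \<le> ?k * card {n. \<alpha> n > 0}"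
      by simp
    ultimately show ?thesis
      using s(2) unfolding zero by (simp add: card_cartesian_product)
  next
    case small
    have "card {p. outer p > ?t} \<le> nat \<lceil>C\<rceil> * card {n. \<alpha> n > s}"
      using card_outer_gt_le_if_Mt_le_Kt[OF bound \<open>C > 0\<close> small] by simp
    also have "\<dots> \<le> ?k * card {n. \<alpha> n > s}"
      by (rule mult_le_mono1) simp
    finally show ?thesis
      using finite_outer_gt[of ?t] small omega_pos by simp
  next
    case large
    then have "?t > 1"
      using omega_pos by simp
    then have "outer p \<le> ?t" for p
      using outer_le_one[of p] by linarith
    then have empty: "{p. outer p > ?t} = {}"
      by (simp add: not_less)
    show ?thesis
      unfolding empty by simp
  qed
qed

lemma tensor_principal_iff_Mt_le_Kt:
  "tensor a a \<in> principal a \<longleftrightarrow>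
    (\<exists>r::nat. r \<ge> 1 \<and> (\<exists>C::real. C > 0 \<and> (\<forall>n. real (Mt \<omega> \<alpha> n) \<le> C * real (Kt \<omega> \<alpha> (n + r)))))"
proof
  assume "tensor a a \<in> principal a"
  then obtain C k where "C > 0" and dom: "dominated_by (drearr outer) \<alpha> C k"
    unfolding principal_eq mem_dominated_seqs cmod_tensor_a_a by blast
  have "dominated_by outer \<alpha> C k"
    using dominated_by_trans[OF dominated_by_drearr_right[OF bdd_above_outer] dom] \<open>C > 0\<close> by simp
  then obtain r where "r \<ge> 1" and Mt: "\<And>n. Mt \<omega> \<alpha> n \<le> k * Kt \<omega> \<alpha> (n + r)"
    using Mt_le_Kt_if_dominated_by \<open>C > 0\<close> by blast
  have "real (Mt \<omega> \<alpha> n) \<le> (real k + 1) * real (Kt \<omega> \<alpha> (n + r))" for n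
  proof -
    have "real (Mt \<omega> \<alpha> n) \<le> real k * real (Kt \<omega> \<alpha> (n + r))"
      using Mt[of n] by (simp only: of_nat_mult[symmetric] of_nat_le_iff)
    also have "\<dots> \<le> (real k + 1) * real (Kt \<omega> \<alpha> (n + r))"
      by (rule mult_right_mono) simp_all
    finally show ?thesis .
  qed
  moreover have "real k + 1 > 0"
    by simp
  ultimately show "\<exists>r::nat. r \<ge> 1 \<and> (\<exists>C::real. C > 0 \<and> (\<forall>n. real (Mt \<omega> \<alpha> n) \<le> C * real (Kt \<omega> \<alpha> (n + r))))"
    using \<open>r \<ge> 1\<close> by blast
next
  assume "\<exists>r::nat. r \<ge> 1 \<and> (\<exists>C::real. C > 0 \<and> (\<forall>n. real (Mt \<omega> \<alpha> n) \<le> C * real (Kt \<omega> \<alpha> (n + r))))"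
  then obtain r C where "C > 0" and bound: "\<And>n. real (Mt \<omega> \<alpha> n) \<le> C * real (Kt \<omega> \<alpha> (n + r))"
    by blast
  let ?C = "1 / \<omega> ^ (r + 1)"
  have C: "?C > 0"
    using omega_pos by simp
  have "dominated_by (drearr outer) \<alpha> ?C (nat \<lceil>C\<rceil> + card {n. \<alpha> n > 0})"
    using dominated_by_trans[OF dominated_by_drearr_left[OF bdd_above_outer]
        dominated_by_outer_if_Mt_le_Kt[OF bound \<open>C > 0\<close>] less_imp_le[OF C]]
    by simp
  then show "tensor a a \<in> principal a"
    unfolding principal_eq mem_dominated_seqs cmod_tensor_a_a using tensor_a_a_in_c0 C by blast
qed

end

theorem theorem2p8:
  fixes \<alpha> :: "nat \<Rightarrow> real" and \<omega> :: real
  assumes "\<And>n. 0 \<le> \<alpha> n"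
    and "\<And>n. \<alpha> (Suc n) \<le> \<alpha> n"
    and "\<alpha> \<longlonglongrightarrow> 0"
    and "\<alpha> 0 \<le> 1"
    and "0 < \<omega>" and "\<omega> < 1"
  defines "a \<equiv> (\<lambda>n. complex_of_real (\<alpha> n))"
  shows "(stable (principal a) \<longleftrightarrow> tensor a a \<in> principal a)
       \<and> (tensor a a \<in> principal a \<longleftrightarrow>
          (\<exists>r::nat. r \<ge> 1 \<and> (\<exists>C::real. C > 0 \<and>
             (\<forall>n. real (Mt \<omega> \<alpha> n) \<le> C * real (Kt \<omega> \<alpha> (n + r))))))"
proof -
  have "\<alpha> n \<le> 1" for n
    using lift_Suc_antimono_le[of \<alpha>, OF assms(2), of 0 n] assms(4) by simp
  then interpret banded_seq \<alpha> \<omega>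
    using assms(1,3,5,6) by unfold_locales
  show ?thesis
    unfolding a_def using stable_principal_iff tensor_principal_iff_Mt_le_Kt by blast
qed

end
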